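(* Let $A_i=\begin{pmatrix}a_i&c_i\\ c_i&b_i\end{pmatrix}$, $i=1,2$, be $2\times2$ positive semidefinite matrices with non-negative real entries. If $a_1\le a_2$, $b_1\le b_2$ and $c_1\le c_2$, then $|||A_1|||\le|||A_2|||$ for every unitarily invariant norm $|||\cdot|||$. *)

theory Defs
  imports "HOL-Analysis.Analysis"
begin

definition conj_transpose :: "complex^2^2 \<Rightarrow> complex^2^2" where
  "conj_transpose A = (\<chi> i j. cnj (A $ j $ i))"

definition unitary2 :: "complex^2^2 \<Rightarrow> bool" where
  "unitary2 U \<longleftrightarrow> conj_transpose U ** U = mat 1"

definition cscale2 :: "complex \<Rightarrow> complex^2^2 \<Rightarrow> complex^2^2" where
  "cscale2 c A = (\<chi> i j. c * A $ i $ j)"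

definition is_matrix_norm2 :: "(complex^2^2 \<Rightarrow> real) \<Rightarrow> bool" where
  "is_matrix_norm2 N \<longleftrightarrow>
     (\<forall>A. 0 \<le> N A) \<and> (\<forall>A. N A = 0 \<longleftrightarrow> A = 0) \<and>
     (\<forall>c A. N (cscale2 c A) = cmod c * N A) \<and>
     (\<forall>A B. N (A + B) \<le> N A + N B)"

definition unitarily_invariant_norm2 :: "(complex^2^2 \<Rightarrow> real) \<Rightarrow> bool" where
  "unitarily_invariant_norm2 N \<longleftrightarrow> is_matrix_norm2 N \<and>
     (\<forall>U V A. unitary2 U \<longrightarrow> unitary2 V \<longrightarrow> N (U ** A ** V) = N A)"

definition psd2 :: "complex^2^2 \<Rightarrow> bool" where
  "psd2 A \<longleftrightarrow> conj_transpose A = A \<and>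
     (\<forall>x :: complex^2. let q = (\<Sum>i\<in>UNIV. cnj (x $ i) * (A *v x) $ i) in Im q = 0 \<and> 0 \<le> Re q)"

definition symmat2 :: "real \<Rightarrow> real \<Rightarrow> real \<Rightarrow> complex^2^2" where
  "symmat2 a c b = vector [vector [complex_of_real a, complex_of_real c],
                          vector [complex_of_real c, complex_of_real b]]"

end

theory Submission imports Defs begin

text \<open>
  A real symmetric 2x2 matrix is diagonalised by a rotation, so a unitarily invariant norm
  sees only its eigenvalues \<open>(a + b)/2 \<plusminus> sqrt (((a - b)/2)\<^sup>2 + c\<^sup>2)\<close>: the norm equals
  \<open>g \<lambda>\<^sub>1 \<lambda>\<^sub>2\<close> with \<open>g x y = N (diag x y)\<close>. The function \<open>g\<close> is convex, symmetric and even in each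
  argument, hence monotone in \<open>\<bar>x\<bar>\<close>, \<open>\<bar>y\<bar>\<close> and Schur-convex, so it increases along weak
  majorization of nonnegative pairs. Positive semidefiniteness makes the eigenvalues
  nonnegative; increasing the entries increases the trace \<open>\<lambda>\<^sub>1 + \<lambda>\<^sub>2 = a + b\<close> and, by the
  triangle inequality for the radius, the top eigenvalue \<open>\<lambda>\<^sub>1\<close>. That is weak majorization.
\<close>

lemma mat2_eq_iff:
  "(A::complex^2^2) = B \<longleftrightarrow> A$1$1 = B$1$1 \<and> A$1$2 = B$1$2 \<and> A$2$1 = B$2$1 \<and> A$2$2 = B$2$2"
  by (auto simp: vec_eq_iff forall_2)

definition rot2 :: "real \<Rightarrow> real \<Rightarrow> complex^2^2" where
  "rot2 p q = vector [vector [complex_of_real p, complex_of_real (-q)],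
                      vector [complex_of_real q, complex_of_real p]]"

lemma unitary2_rot2:
  assumes "p\<^sup>2 + q\<^sup>2 = 1"
  shows "unitary2 (rot2 p q)"
proof -
  have "complex_of_real (p*p) + complex_of_real (q*q) = 1"
    using assms by (metis of_real_1 of_real_add power2_eq_square)
  then show ?thesis
    unfolding unitary2_def mat2_eq_iff
    by (simp add: rot2_def conj_transpose_def matrix_matrix_mult_def sum_2 mat_def algebra_simps)
qed

lemma rot2_diag_rot2:
  "rot2 p q ** symmat2 x 0 y ** rot2 p (-q) =
     symmat2 (x*p\<^sup>2 + y*q\<^sup>2) ((x - y)*p*q) (x*q\<^sup>2 + y*p\<^sup>2)"
  unfolding mat2_eq_iff
  by (simp add: rot2_def symmat2_def matrix_matrix_mult_def sum_2 power2_eq_square algebra_simps)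

lemma unitary2_mat1: "unitary2 (mat 1)"
  unfolding unitary2_def mat2_eq_iff
  by (simp add: conj_transpose_def matrix_matrix_mult_def sum_2 mat_def)

lemma unitary2_reflection: "unitary2 (symmat2 (-1) 0 1)"
  unfolding unitary2_def mat2_eq_iff
  by (simp add: symmat2_def conj_transpose_def matrix_matrix_mult_def sum_2 mat_def)

lemma reflection_diag: "symmat2 (-1) 0 1 ** symmat2 x 0 y ** mat 1 = symmat2 (-x) 0 y"
  unfolding mat2_eq_iff
  by (simp add: symmat2_def matrix_matrix_mult_def sum_2 mat_def)

lemma symmat2_diag_lincomb:
  "symmat2 (t*x + s*x') 0 (t*y + s*y') =
     cscale2 (of_real t) (symmat2 x 0 y) + cscale2 (of_real s) (symmat2 x' 0 y')"
  unfolding mat2_eq_iff by (simp add: symmat2_def cscale2_def)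

definition diag_norm2 :: "(complex^2^2 \<Rightarrow> real) \<Rightarrow> real \<Rightarrow> real \<Rightarrow> real" where
  "diag_norm2 N x y = N (symmat2 x 0 y)"

lemma diag_norm2_convex:
  assumes "is_matrix_norm2 N" and "0 \<le> t" "t \<le> 1"
  shows "diag_norm2 N (t*x + (1 - t)*x') (t*y + (1 - t)*y')
           \<le> t * diag_norm2 N x y + (1 - t) * diag_norm2 N x' y'"
proof -
  have "diag_norm2 N (t*x + (1 - t)*x') (t*y + (1 - t)*y') =
          N (cscale2 (of_real t) (symmat2 x 0 y) + cscale2 (of_real (1 - t)) (symmat2 x' 0 y'))"
    unfolding diag_norm2_def by (simp add: symmat2_diag_lincomb)
  also have "\<dots> \<le> N (cscale2 (of_real t) (symmat2 x 0 y)) + N (cscale2 (of_real (1 - t)) (symmat2 x' 0 y'))"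
    using assms(1) unfolding is_matrix_norm2_def by blast
  also have "\<dots> = t * diag_norm2 N x y + (1 - t) * diag_norm2 N x' y'"
  proof -
    have "cmod (of_real t) = t" "cmod (of_real (1 - t)) = 1 - t"
      using assms(2,3) by (simp_all only: norm_of_real)
    then show ?thesis using assms(1) unfolding is_matrix_norm2_def diag_norm2_def by metis
  qed
  finally show ?thesis .
qed

context
  fixes N :: "complex^2^2 \<Rightarrow> real"
  assumes UI: "unitarily_invariant_norm2 N"
begin

lemma norm_rotated_diag:
  assumes "p\<^sup>2 + q\<^sup>2 = 1"
  shows "N (symmat2 (x*p\<^sup>2 + y*q\<^sup>2) ((x - y)*p*q) (x*q\<^sup>2 + y*p\<^sup>2)) = diag_norm2 N x y"
proof -
  have "p\<^sup>2 + (-q)\<^sup>2 = 1" using assms by simp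
  then show ?thesis
    using UI unitary2_rot2[OF assms] unitary2_rot2[of p "-q"] rot2_diag_rot2[of p q x y]
    unfolding unitarily_invariant_norm2_def diag_norm2_def by metis
qed

lemma diag_norm2_commute: "diag_norm2 N x y = diag_norm2 N y x"
  using norm_rotated_diag[of 0 1 x y] by (simp add: diag_norm2_def)

lemma diag_norm2_uminus: "diag_norm2 N (-x) y = diag_norm2 N x y"
  using UI unitary2_reflection unitary2_mat1 reflection_diag[of x y]
  unfolding unitarily_invariant_norm2_def diag_norm2_def by metis

lemma diag_norm2_mono_left:
  assumes "\<bar>u\<bar> \<le> v"
  shows "diag_norm2 N u w \<le> diag_norm2 N v w"
proof (cases "v = 0")
  case True
  then show ?thesis using assms by simp
next
  case False
  then have "v > 0" using assms by simp
  define t where "t = (v + u) / (2 * v)"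
  have t: "0 \<le> t" "t \<le> 1" using assms \<open>v > 0\<close> by (auto simp: t_def field_simps)
  have "u = t * v + (1 - t) * (- v)" and "w = t * w + (1 - t) * w"
    using \<open>v > 0\<close> by (simp_all add: t_def field_simps)
  then have "diag_norm2 N u w = diag_norm2 N (t * v + (1 - t) * (- v)) (t * w + (1 - t) * w)"
    by simp
  also have "\<dots> \<le> t * diag_norm2 N v w + (1 - t) * diag_norm2 N (-v) w"
    using UI t unfolding unitarily_invariant_norm2_def by (intro diag_norm2_convex) auto
  also have "\<dots> = diag_norm2 N v w"
    by (simp add: diag_norm2_uminus algebra_simps)
  finally show ?thesis .
qed

lemma diag_norm2_mono_right:
  assumes "\<bar>u\<bar> \<le> v"
  shows "diag_norm2 N w u \<le> diag_norm2 N w v"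
  using diag_norm2_mono_left[OF assms] diag_norm2_commute by metis

lemma diag_norm2_weak_majorization:
  assumes "0 \<le> x2" "x2 \<le> x1" "x1 \<le> y1" "x1 + x2 \<le> y1 + y2"
  shows "diag_norm2 N x1 x2 \<le> diag_norm2 N y1 y2"
proof (cases "x2 \<le> y2")
  case True
  have "diag_norm2 N x1 x2 \<le> diag_norm2 N y1 x2"
    using assms by (intro diag_norm2_mono_left) simp
  also have "\<dots> \<le> diag_norm2 N y1 y2"
    using assms True by (intro diag_norm2_mono_right) simp
  finally show ?thesis .
next
  case False
  \<comment> \<open>Raise \<open>x1\<close> until the sums agree; \<open>(y1 + y2 - x2, x2)\<close> is then a convex combination
      of \<open>(y1, y2)\<close> and its transposition.\<close>
  define t where "t = (y1 - x2) / (y1 - y2)"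
  have "y2 < y1" using False assms by simp
  then have t: "0 \<le> t" "t \<le> 1" using False assms by (auto simp: t_def field_simps)
  have "t*(y1 - y2) = y1 - x2" using \<open>y2 < y1\<close> by (simp add: t_def)
  then have convex_comb: "y1 + y2 - x2 = t*y1 + (1 - t)*y2" "x2 = t*y2 + (1 - t)*y1"
    by (simp_all add: algebra_simps)
  have "diag_norm2 N x1 x2 \<le> diag_norm2 N (y1 + y2 - x2) x2"
    using assms by (intro diag_norm2_mono_left) simp
  also have "\<dots> = diag_norm2 N (t*y1 + (1 - t)*y2) (t*y2 + (1 - t)*y1)"
    using convex_comb by simp
  also have "\<dots> \<le> t * diag_norm2 N y1 y2 + (1 - t) * diag_norm2 N y2 y1"
    using UI t unfolding unitarily_invariant_norm2_def by (intro diag_norm2_convex) auto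
  also have "\<dots> = diag_norm2 N y1 y2"
    by (simp add: diag_norm2_commute[of y2 y1] algebra_simps)
  finally show ?thesis .
qed

end

definition eigval_max2 :: "real \<Rightarrow> real \<Rightarrow> real \<Rightarrow> real" where
  "eigval_max2 a c b = (a + b)/2 + sqrt (((a - b)/2)\<^sup>2 + c\<^sup>2)"

definition eigval_min2 :: "real \<Rightarrow> real \<Rightarrow> real \<Rightarrow> real" where
  "eigval_min2 a c b = (a + b)/2 - sqrt (((a - b)/2)\<^sup>2 + c\<^sup>2)"

lemma eigval_min2_le_max2: "eigval_min2 a c b \<le> eigval_max2 a c b"
  by (simp add: eigval_min2_def eigval_max2_def)

lemma eigval_max2_plus_min2: "eigval_max2 a c b + eigval_min2 a c b = a + b"
  by (simp add: eigval_min2_def eigval_max2_def)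

lemma eigval_max2_mono:
  assumes "\<bar>c\<bar> \<le> c'" "a \<le> a'" "b \<le> b'"
  shows "eigval_max2 a c b \<le> eigval_max2 a' c' b'"
proof -
  let ?d = "(a - b)/2" and ?d' = "(a' - b')/2"
  have "c\<^sup>2 \<le> c'\<^sup>2"
    using assms(1) by (metis abs_ge_zero power2_abs power_mono)
  have "sqrt (?d\<^sup>2 + c\<^sup>2) = sqrt ((?d' + (?d - ?d'))\<^sup>2 + (c + 0)\<^sup>2)" by simp
  also have "\<dots> \<le> sqrt (?d'\<^sup>2 + c\<^sup>2) + sqrt ((?d - ?d')\<^sup>2 + 0\<^sup>2)"
    by (rule real_sqrt_sum_squares_triangle_ineq)
  also have "\<dots> \<le> sqrt (?d'\<^sup>2 + c'\<^sup>2) + \<bar>?d - ?d'\<bar>"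
    using \<open>c\<^sup>2 \<le> c'\<^sup>2\<close> by simp
  also have "\<dots> \<le> sqrt (?d'\<^sup>2 + c'\<^sup>2) + ((a' - a) + (b' - b))/2"
    using assms(2,3) by (intro add_left_mono abs_leI) (simp_all add: field_simps)
  finally show ?thesis
    unfolding eigval_max2_def by (simp add: add_divide_distrib diff_divide_distrib)
qed

lemma norm_symmat2_eq_diag_norm2:
  assumes UI: "unitarily_invariant_norm2 N"
  shows "N (symmat2 a c b) = diag_norm2 N (eigval_max2 a c b) (eigval_min2 a c b)"
proof -
  define d where "d = (a - b)/2"
  define r where "r = sqrt (d\<^sup>2 + c\<^sup>2)"
  have eig: "eigval_max2 a c b = (a + b)/2 + r" "eigval_min2 a c b = (a + b)/2 - r"
    by (simp_all add: eigval_max2_def eigval_min2_def r_def d_def)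
  show ?thesis
  proof (cases "r = 0")
    case True
    then have "c = 0" "a = b" by (simp_all add: r_def d_def add_nonneg_eq_0_iff)
    then show ?thesis using True eig by (simp add: diag_norm2_def)
  next
    case False
    then have "r > 0" by (simp add: r_def order_less_le)
    have rr: "r\<^sup>2 = d\<^sup>2 + c\<^sup>2" by (simp add: r_def)
    have "\<bar>d\<bar> \<le> r"
      unfolding r_def by (metis le_add_same_cancel1 real_sqrt_abs real_sqrt_le_mono zero_le_power2)
    \<comment> \<open>\<open>(p, q)\<close> is the unit eigenvector of the top eigenvalue; the sign of \<open>q\<close> follows \<open>c\<close>.\<close>
    define p where "p = sqrt ((r + d)/(2*r))"
    define s :: real where "s = (if c < 0 then -1 else 1)"
    define q where "q = s * sqrt ((r - d)/(2*r))"
    have p2: "p\<^sup>2 = (r + d)/(2*r)" and q2: "q\<^sup>2 = (r - d)/(2*r)"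
      using \<open>\<bar>d\<bar> \<le> r\<close> \<open>r > 0\<close> by (simp_all add: p_def q_def s_def power_mult_distrib)
    have "p\<^sup>2 + q\<^sup>2 = 1" using \<open>r > 0\<close> by (simp add: p2 q2 field_simps)
    have "p*q = s * sqrt ((r + d)/(2*r) * ((r - d)/(2*r)))"
      unfolding p_def q_def real_sqrt_mult by (rule mult.left_commute)
    also have "(r + d)/(2*r) * ((r - d)/(2*r)) = (c/(2*r))\<^sup>2"
      using rr \<open>r > 0\<close> by (simp add: field_simps power2_eq_square)
    also have "s * sqrt ((c/(2*r))\<^sup>2) = c/(2*r)"
      using \<open>r > 0\<close> by (simp add: s_def abs_if divide_less_0_iff)
    finally have "p*q = c/(2*r)" .
    then have "((a + b)/2 + r - ((a + b)/2 - r))*p*q = c"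
      using \<open>r > 0\<close> by (simp add: field_simps)
    moreover have "((a + b)/2 + r)*p\<^sup>2 + ((a + b)/2 - r)*q\<^sup>2 = a"
      and "((a + b)/2 + r)*q\<^sup>2 + ((a + b)/2 - r)*p\<^sup>2 = b"
      using \<open>r > 0\<close> by (simp_all add: p2 q2 d_def field_simps)
    ultimately show ?thesis
      using norm_rotated_diag[OF UI \<open>p\<^sup>2 + q\<^sup>2 = 1\<close>, of "(a + b)/2 + r" "(a + b)/2 - r"] eig
      by simp
  qed
qed

lemma psd2_symmat2_quadratic_form:
  assumes "psd2 (symmat2 a c b)"
  shows "0 \<le> a*u\<^sup>2 + 2*c*u*z + b*z\<^sup>2"
proof -
  let ?x = "vector [complex_of_real u, complex_of_real z] :: complex^2"
  let ?form = "\<Sum>i\<in>UNIV. cnj (?x $ i) * (symmat2 a c b *v ?x) $ i"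
  have "symmat2 a c b *v ?x = vector [complex_of_real (a*u + c*z), complex_of_real (c*u + b*z)]"
    by (simp add: vec_eq_iff forall_2 symmat2_def matrix_vector_mult_def sum_2)
  then have "?form = complex_of_real (u*(a*u + c*z) + z*(c*u + b*z))"
    by (simp add: sum_2)
  also have "u*(a*u + c*z) + z*(c*u + b*z) = a*u\<^sup>2 + 2*c*u*z + b*z\<^sup>2"
    by (simp add: power2_eq_square algebra_simps)
  finally have "?form = complex_of_real (a*u\<^sup>2 + 2*c*u*z + b*z\<^sup>2)" .
  moreover have "0 \<le> Re ?form"
    using assms unfolding psd2_def Let_def by blast
  ultimately show ?thesis by simp
qed

lemma psd2_symmat2D:
  assumes "psd2 (symmat2 a c b)"
  shows "0 \<le> a" "0 \<le> b" "c\<^sup>2 \<le> a*b"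
proof -
  note form = psd2_symmat2_quadratic_form[OF assms]
  show "0 \<le> a" "0 \<le> b" using form[of 1 0] form[of 0 1] by simp_all
  show "c\<^sup>2 \<le> a*b"
  proof (cases "a + b = 0")
    case True
    then have "a = 0" "b = 0" using \<open>0 \<le> a\<close> \<open>0 \<le> b\<close> by simp_all
    then have "c = 0" using form[of 1 1] form[of 1 "-1"] by simp
    then show ?thesis using \<open>a = 0\<close> by simp
  next
    case False
    then have "0 < a + b" using \<open>0 \<le> a\<close> \<open>0 \<le> b\<close> by simp
    have "0 \<le> a*(a*b - c\<^sup>2)" "0 \<le> b*(a*b - c\<^sup>2)"
      using form[of "-c" a] form[of b "-c"] by (simp_all add: power2_eq_square algebra_simps)
    then have "0 \<le> (a + b)*(a*b - c\<^sup>2)" by (simp only: distrib_right add_nonneg_nonneg)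
    then show ?thesis using \<open>0 < a + b\<close> by (simp add: zero_le_mult_iff)
  qed
qed

lemma psd2_symmat2_eigval_min2_nonneg:
  assumes "psd2 (symmat2 a c b)"
  shows "0 \<le> eigval_min2 a c b"
proof -
  note psd = psd2_symmat2D[OF assms]
  have "((a + b)/2)\<^sup>2 - ((a - b)/2)\<^sup>2 = a*b"
    by (simp add: power2_eq_square field_simps)
  then have "sqrt (((a - b)/2)\<^sup>2 + c\<^sup>2) \<le> sqrt (((a + b)/2)\<^sup>2)"
    using psd(3) by (intro real_sqrt_le_mono) linarith
  also have "\<dots> = (a + b)/2"
    using psd(1,2) by simp
  finally show ?thesis by (simp add: eigval_min2_def)
qed

theorem mainTheorem10:
  fixes a1 b1 c1 a2 b2 c2 :: real and N :: "complex^2^2 \<Rightarrow> real"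
  assumes "0 \<le> a1" "0 \<le> b1" "0 \<le> c1" "0 \<le> a2" "0 \<le> b2" "0 \<le> c2"
    and "psd2 (symmat2 a1 c1 b1)" "psd2 (symmat2 a2 c2 b2)"
    and "a1 \<le> a2" "b1 \<le> b2" "c1 \<le> c2"
    and "unitarily_invariant_norm2 N"
  shows "N (symmat2 a1 c1 b1) \<le> N (symmat2 a2 c2 b2)"
proof -
  have "diag_norm2 N (eigval_max2 a1 c1 b1) (eigval_min2 a1 c1 b1)
          \<le> diag_norm2 N (eigval_max2 a2 c2 b2) (eigval_min2 a2 c2 b2)"
  proof (rule diag_norm2_weak_majorization[OF \<open>unitarily_invariant_norm2 N\<close>])
    show "0 \<le> eigval_min2 a1 c1 b1"
      using \<open>psd2 (symmat2 a1 c1 b1)\<close> by (rule psd2_symmat2_eigval_min2_nonneg)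
    show "eigval_min2 a1 c1 b1 \<le> eigval_max2 a1 c1 b1"
      by (rule eigval_min2_le_max2)
    show "eigval_max2 a1 c1 b1 \<le> eigval_max2 a2 c2 b2"
      using assms by (intro eigval_max2_mono) auto
    show "eigval_max2 a1 c1 b1 + eigval_min2 a1 c1 b1 \<le> eigval_max2 a2 c2 b2 + eigval_min2 a2 c2 b2"
      using assms by (simp add: eigval_max2_plus_min2)
  qed
  then show ?thesis
    using norm_symmat2_eq_diag_norm2[OF \<open>unitarily_invariant_norm2 N\<close>] by simp
qed

end
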